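(* Every permutation $(a_1,a_2,a_3,\ldots)$ of the positive integers contains a 3-term arithmetic progression with odd common difference as a subsequence.
   Context: A permutation of the positive integers is a sequence $(a_1,a_2,\ldots)$ in which every positive integer appears exactly once. A sequence contains a $k$-term arithmetic progression with common difference $d\neq 0$ as a subsequence if there are indices $i_1<i_2<\cdots<i_k$ with $a_{i_{m+1}} - a_{i_m} = d$ for all $1\le m<k$. The difference $d$ may be positive or negative. *)

theory Defs
  imports Main
begin

text \<open>A permutation of the positive integers, indexed from 0: a bijection from nat onto {1..}.\<close>
definition perm_pos :: "(nat \<Rightarrow> nat) \<Rightarrow> bool" where
  "perm_pos a \<longleftrightarrow> bij_betw a UNIV {1..}"

definition has_AP_subseq :: "(nat \<Rightarrow> nat) \<Rightarrow> nat \<Rightarrow> int \<Rightarrow> bool" where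
  "has_AP_subseq a k d \<longleftrightarrow> d \<noteq> 0 \<and> (\<exists>idx :: nat \<Rightarrow> nat. strict_mono_on {..<k} idx \<and>
     (\<forall>m. m + 1 < k \<longrightarrow> int (a (idx (m + 1))) - int (a (idx m)) = d))"

end

theory Submission
  imports Defs
begin

(*
  Call index i a left-to-right maximum of the sequence a if
  a j < a i for all j < i.  Since a permutation of the positive integers is
  unbounded, there are such maxima beyond any given index; take one, i, lying
  after the positions of the values 1 and 2, and put v = a i, so v \<ge> 3.
  Choose c \<in> {1,2} with v - c odd.  The value 2v - c exceeds v, so (i being a
  left-to-right maximum) it occurs at some index k > i, while c occurs before i.
  Hence c, v, 2v - c is a 3-term progression with the odd difference v - c.
*)

lemma has_AP3_intro:
  assumes "p < i" "i < k" "d \<noteq> 0"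
    and "int (a i) - int (a p) = d" "int (a k) - int (a i) = d"
  shows "has_AP_subseq a 3 d"
proof -
  define idx where "idx = (\<lambda>m::nat. if m = 0 then p else if m = 1 then i else k)"
  have "strict_mono_on {..<3} idx"
    unfolding strict_mono_on_def idx_def using assms(1,2) by auto
  moreover have "int (a (idx (m + 1))) - int (a (idx m)) = d" if "m + 1 < 3" for m
  proof -
    from that have "m = 0 \<or> m = 1" by auto
    then show ?thesis using assms(4,5) unfolding idx_def by auto
  qed
  ultimately show ?thesis unfolding has_AP_subseq_def using assms(3) by blast
qed

text \<open>An unbounded sequence of naturals has left-to-right maxima after every index: take the
  first index whose value exceeds everything seen up to M.\<close>
lemma left_max_after:
  fixes a :: "nat \<Rightarrow> nat"
  assumes unbounded: "\<And>N. \<exists>i. N < a i"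
  shows "\<exists>i. M < i \<and> (\<forall>j<i. a j < a i)"
proof -
  define N where "N = Max (a ` {..M})"
  have below_N: "a j \<le> N" if "j \<le> M" for j
    unfolding N_def using that by (simp add: Max_ge)
  define i where "i = (LEAST i. N < a i)"
  have exceeds: "N < a i"
    unfolding i_def using unbounded by (rule LeastI_ex)
  have first: "a j \<le> N" if "j < i" for j
    using that not_less_Least unfolding i_def by (metis not_le)
  have "M < i" using below_N exceeds by (metis not_le)
  moreover have "\<forall>j<i. a j < a i" using first exceeds by (meson le_less_trans)
  ultimately show ?thesis by blast
qed

text \<open>The reflection step: if c occurs before a left-to-right maximum i with c < a i and
  a i - c odd, and the value 2 a i - c occurs anywhere, then c, a i, 2 a i - c
  is a progression with odd difference (the reflected value must come after i).\<close>
lemma odd_AP_by_reflection: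
  fixes a :: "nat \<Rightarrow> nat"
  assumes leftmax: "\<forall>j<i. a j < a i"
    and before: "p < i" "a p = c" and small: "c < a i"
    and odd_gap: "odd (int (a i) - int c)"
    and reflected: "a k = 2 * a i - c"
  shows "\<exists>d :: int. odd d \<and> has_AP_subseq a 3 d"
proof -
  have "a i < a k" using reflected small by simp
  then have "i < k" using leftmax by (metis less_asym nat_neq_iff)
  then have "has_AP_subseq a 3 (int (a i) - int c)"
    using before small reflected odd_gap by (intro has_AP3_intro) auto
  with odd_gap show ?thesis by blast
qed

lemma odd_gap_to_one_or_two:
  assumes "3 \<le> (v :: nat)"
  obtains c where "c \<in> {1, 2}" "odd (int v - int c)"
proof (cases "even v")
  case True
  then have "odd (int v - 1)" using assms by simp
  then show ?thesis using that[of 1] by simp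
next
  case False
  then have "odd (int v - 2)" using assms by simp
  then show ?thesis using that[of 2] by simp
qed

theorem theorem2:
  fixes a :: "nat \<Rightarrow> nat"
  assumes "perm_pos a"
  shows "\<exists>d :: int. odd d \<and> has_AP_subseq a 3 d"
proof -
  have onto: "\<exists>i. a i = n" if "1 \<le> n" for n
    using assms that unfolding perm_pos_def bij_betw_def by (metis atLeast_iff rangeE)
  obtain p1 p2 where p1: "a p1 = 1" and p2: "a p2 = 2" using onto by (metis one_le_numeral order_refl)
  have "\<exists>i. N < a i" for N using onto[of "Suc N"] by (metis lessI le_add1 plus_1_eq_Suc)
  then obtain i where late: "max p1 p2 < i" and leftmax: "\<forall>j<i. a j < a i"
    using left_max_after by blast
  have "3 \<le> a i" using leftmax late p2 by (metis max.strict_boundedE numeral_2_eq_2 numeral_3_eq_3 Suc_leI)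
  then obtain c where c: "c \<in> {1, 2}" "odd (int (a i) - int c)"
    using odd_gap_to_one_or_two by blast
  obtain p where "p < i" "a p = c" using c(1) p1 p2 late by auto
  moreover obtain k where "a k = 2 * a i - c" using onto \<open>3 \<le> a i\<close> c(1) by fastforce
  ultimately show ?thesis
    using odd_AP_by_reflection[OF leftmax] c \<open>3 \<le> a i\<close> by fastforce
qed

end
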